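(* Let $\mathbb{F}$ be an algebraically closed field with $\mathrm{char}\,\mathbb{F}=2$ and $n\ge4$. Let $\underline{a}=(e_1,e_2,\mathbf{u}_1,\mathbf{v}_1,0,\ldots,0)\in\mathbb{M}^n$ and let $\underline{b}\in\mathbb{M}^n$ be such that $f(\underline{a})=f(\underline{b})$ for all $f\in S_n^{(3)}$. Then ${\rm G}_2\underline{a}={\rm G}_2\underline{b}$.
   Context: The split octonion algebra $\mathbf{O}$ is the 8-dimensional $\mathbb{F}$-vector space of formal matrices $a=\begin{pmatrix}\alpha&\mathbf{u}\\ \mathbf{v}&\beta\end{pmatrix}$ with $\alpha,\beta\in\mathbb{F}$, $\mathbf{u},\mathbf{v}\in\mathbb{F}^3$, with multiplication $\begin{pmatrix}\alpha&\mathbf{u}\\ \mathbf{v}&\beta\end{pmatrix}\begin{pmatrix}\alpha'&\mathbf{u}'\\ \mathbf{v}'&\beta'\end{pmatrix}=\begin{pmatrix}\alpha\alpha'+\mathbf{u}\cdot\mathbf{v}'&\alpha\mathbf{u}'+\beta'\mathbf{u}-\mathbf{v}\times\mathbf{v}'\\ \alpha'\mathbf{v}+\beta\mathbf{v}'+\mathbf{u}\times\mathbf{u}'&\beta\beta'+\mathbf{v}\cdot\mathbf{u}'\end{pmatrix}$ (dot product and cross product on $\mathbb{F}^3$). Trace $\mathrm{tr}(a)=\alpha+\beta$, norm $n(a)=\alpha\beta-\mathbf{u}\cdot\mathbf{v}$. With $\mathbf{c}_1$ the first standard basis vector of $\mathbb{F}^3$: $e_1$ has $\alpha=1$ and all else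 $0$, $e_2$ has $\beta=1$ and all else $0$, $\mathbf{u}_1$ has $\mathbf{u}=\mathbf{c}_1$ and all else $0$, $\mathbf{v}_1$ has $\mathbf{v}=\mathbf{c}_1$ and all else $0$. $\mathbb{M}=\left\{\begin{pmatrix}\alpha&(\gamma,0,0)\\(\delta,0,0)&\beta\end{pmatrix}\right\}\subseteq\mathbf{O}$ is the quaternion subalgebra. ${\rm G}_2=\mathrm{Aut}(\mathbf{O})$ acts diagonally on $\mathbf{O}^n$. $S_n^{(3)}$ is the set of functions on $\mathbf{O}^n$: $\underline{a}\mapsto n(a_i)$, $\underline{a}\mapsto\mathrm{tr}(a_i)$ ($1\le i\le n$), $\underline{a}\mapsto\mathrm{tr}(a_ia_j)$ ($1\le i<j\le n$), and $\underline{a}\mapsto\mathrm{tr}((a_ia_j)a_k)$ ($1\le i<j<k\le n$). *)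

theory Defs
  imports "HOL-Computational_Algebra.Polynomial"
begin

definition alg_closed :: "'a::field itself \<Rightarrow> bool" where
  "alg_closed _ \<longleftrightarrow> (\<forall>p::'a poly. degree p \<noteq> 0 \<longrightarrow> (\<exists>x. poly p x = 0))"

type_synonym 'a vec3 = "'a \<times> 'a \<times> 'a"

fun dot3 :: "'a::comm_ring_1 vec3 \<Rightarrow> 'a vec3 \<Rightarrow> 'a" where
  "dot3 (a1, a2, a3) (b1, b2, b3) = a1 * b1 + a2 * b2 + a3 * b3"

fun cross3 :: "'a::comm_ring_1 vec3 \<Rightarrow> 'a vec3 \<Rightarrow> 'a vec3" where
  "cross3 (a1, a2, a3) (b1, b2, b3) =
     (a2 * b3 - a3 * b2, a3 * b1 - a1 * b3, a1 * b2 - a2 * b1)"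

fun add3 :: "'a::comm_ring_1 vec3 \<Rightarrow> 'a vec3 \<Rightarrow> 'a vec3" where
  "add3 (a1, a2, a3) (b1, b2, b3) = (a1 + b1, a2 + b2, a3 + b3)"

fun smul3 :: "'a::comm_ring_1 \<Rightarrow> 'a vec3 \<Rightarrow> 'a vec3" where
  "smul3 c (a1, a2, a3) = (c * a1, c * a2, c * a3)"

section \<open>Split octonions: formal matrices (alpha, u; v, beta)\<close>

datatype 'a oct = Oct (oalpha: 'a) (ou: "'a vec3") (ov: "'a vec3") (obeta: 'a)

definition oadd :: "'a::comm_ring_1 oct \<Rightarrow> 'a oct \<Rightarrow> 'a oct" where
  "oadd a b = Oct (oalpha a + oalpha b) (add3 (ou a) (ou b)) (add3 (ov a) (ov b)) (obeta a + obeta b)"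

definition osmul :: "'a::comm_ring_1 \<Rightarrow> 'a oct \<Rightarrow> 'a oct" where
  "osmul c a = Oct (c * oalpha a) (smul3 c (ou a)) (smul3 c (ov a)) (c * obeta a)"

definition ozero :: "'a::comm_ring_1 oct" where
  "ozero = Oct 0 (0, 0, 0) (0, 0, 0) 0"

definition omult :: "'a::comm_ring_1 oct \<Rightarrow> 'a oct \<Rightarrow> 'a oct" where
  "omult a b = Oct
     (oalpha a * oalpha b + dot3 (ou a) (ov b))
     (add3 (add3 (smul3 (oalpha a) (ou b)) (smul3 (obeta b) (ou a))) (smul3 (-1) (cross3 (ov a) (ov b))))
     (add3 (add3 (smul3 (oalpha b) (ov a)) (smul3 (obeta a) (ov b))) (cross3 (ou a) (ou b)))
     (obeta a * obeta b + dot3 (ov a) (ou b))"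

definition otr :: "'a::comm_ring_1 oct \<Rightarrow> 'a" where
  "otr a = oalpha a + obeta a"

definition onorm :: "'a::comm_ring_1 oct \<Rightarrow> 'a" where
  "onorm a = oalpha a * obeta a - dot3 (ou a) (ov a)"

definition oe1 :: "'a::comm_ring_1 oct" where "oe1 = Oct 1 (0,0,0) (0,0,0) 0"
definition oe2 :: "'a::comm_ring_1 oct" where "oe2 = Oct 0 (0,0,0) (0,0,0) 1"
definition ou1 :: "'a::comm_ring_1 oct" where "ou1 = Oct 0 (1,0,0) (0,0,0) 0"
definition ov1 :: "'a::comm_ring_1 oct" where "ov1 = Oct 0 (0,0,0) (1,0,0) 0"

definition quatM :: "'a::comm_ring_1 oct set" where
  "quatM = {Oct \<alpha> (\<gamma>, 0, 0) (\<delta>, 0, 0) \<beta> | \<alpha> \<beta> \<gamma> \<delta>. True}"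

definition G2 :: "('a::comm_ring_1 oct \<Rightarrow> 'a oct) set" where
  "G2 = {g. bij g \<and> (\<forall>x y. g (oadd x y) = oadd (g x) (g y))
             \<and> (\<forall>c x. g (osmul c x) = osmul c (g x))
             \<and> (\<forall>x y. g (omult x y) = omult (g x) (g y))}"

definition G2_orbit :: "'a::comm_ring_1 oct list \<Rightarrow> 'a oct list set" where
  "G2_orbit xs = {map g xs | g. g \<in> G2}"

section \<open>The set of invariants S_n^(3) (indices 0-based)\<close>

definition S3 :: "nat \<Rightarrow> ('a::comm_ring_1 oct list \<Rightarrow> 'a) set" where
  "S3 n =
     {(\<lambda>x. onorm (x ! i)) | i. i < n}
   \<union> {(\<lambda>x. otr (x ! i)) | i. i < n}
   \<union> {(\<lambda>x. otr (omult (x ! i) (x ! j))) | i j. i < j \<and> j < n}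
   \<union> {(\<lambda>x. otr (omult (omult (x ! i) (x ! j)) (x ! k))) | i j k. i < j \<and> j < k \<and> k < n}"

end

theory Submission
  imports Defs
begin

text \<open>
  The third and fourth entries \<open>U\<close>, \<open>V\<close> of \<open>b\<close> have the invariants of \<open>u\<^sub>1\<close>, \<open>v\<^sub>1\<close>:
  trace and norm \<open>0\<close> and \<open>tr(UV) = 1\<close>. In \<open>\<bbbM> \<cong> M\<^sub>2(\<bbbF>)\<close> this makes \<open>UV, U, V, VU\<close>
  a system of matrix units, so \<open>e\<^sub>1, u\<^sub>1, v\<^sub>1, e\<^sub>2 \<mapsto> UV, U, V, VU\<close> is an automorphism
  \<open>\<phi>\<close> of \<open>\<bbbM>\<close>; writing \<open>\<bold>O = \<bbbM> \<oplus> \<bbbM>\<ell>\<close> (Cayley-Dickson doubling),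
  \<open>p + q\<ell> \<mapsto> \<phi>(p) + \<phi>(q)\<ell>\<close> is an automorphism of \<open>\<bold>O\<close>.
  The trace form of \<open>\<bbbM>\<close> is nondegenerate, with \<open>UV, V, U, VU\<close> dual to
  \<open>UV, U, V, VU\<close>, so every \<open>z \<in> \<bbbM>\<close> is determined by \<open>tr z\<close>, \<open>tr(zU)\<close>, \<open>tr(zV)\<close>,
  \<open>tr((zU)V)\<close>. As \<open>tr(xy)\<close> and \<open>tr((xy)z)\<close> are invariant under cyclic permutations,
  for the other entries \<open>z\<close> of \<open>b\<close> these numbers are values of invariants in
  \<open>S\<^sub>n\<^sup>(\<^sup>3\<^sup>)\<close>, and comparing them with those of \<open>a\<close> gives \<open>b = \<phi> a\<close>.
\<close>

subsection \<open>The quaternion subalgebra\<close>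

text \<open>\<open>quat a c d b\<close> stands for the matrix with rows \<open>(a, c)\<close> and \<open>(d, b)\<close>: products,
  traces and norms in \<open>\<bbbM>\<close> are those of \<open>2 \<times> 2\<close> matrices.\<close>

definition quat :: "'a::zero \<Rightarrow> 'a \<Rightarrow> 'a \<Rightarrow> 'a \<Rightarrow> 'a oct" where
  "quat a c d b = Oct a (c, 0, 0) (d, 0, 0) b"

lemma quat_sel [simp]:
  "oalpha (quat a c d b) = a" "fst (ou (quat a c d b)) = c" "fst (ov (quat a c d b)) = d"
  "obeta (quat a c d b) = b"
  by (simp_all add: quat_def)

lemma quatM_iff: "x \<in> quatM \<longleftrightarrow> (\<exists>a c d b. x = quat a c d b)"
  by (auto simp: quatM_def quat_def)

lemma quat_in_quatM [simp]: "quat a c d b \<in> quatM"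
  by (auto simp: quatM_iff)

lemma basis_eq_quat:
  "oe1 = quat 1 0 0 0" "oe2 = quat 0 0 0 1" "ou1 = quat 0 1 0 0" "ov1 = quat 0 0 1 0"
  "ozero = quat 0 0 0 0"
  by (simp_all add: oe1_def oe2_def ou1_def ov1_def ozero_def quat_def)

lemma omult_quat:
  "omult (quat a c d b) (quat a' c' d' b') =
     quat (a * a' + c * d') (a * c' + c * b') (d * a' + b * d') (d * c' + b * b')"
  by (simp add: omult_def quat_def algebra_simps)

lemma oadd_quat: "oadd (quat a c d b) (quat a' c' d' b') = quat (a + a') (c + c') (d + d') (b + b')"
  by (simp add: oadd_def quat_def)

lemma osmul_quat: "osmul k (quat a c d b) = quat (k * a) (k * c) (k * d) (k * b)"
  by (simp add: osmul_def quat_def)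

lemma otr_quat: "otr (quat a c d b) = a + b"
  by (simp add: otr_def quat_def)

lemma onorm_quat: "onorm (quat a c d b) = a * b - c * d"
  by (simp add: onorm_def quat_def)

lemma otr_omult_commute: "otr (omult x y) = otr (omult y x)"
  by (cases x; cases y) (auto simp: omult_def otr_def algebra_simps split: prod.splits)

lemma otr_omult_cyclic: "otr (omult (omult x y) z) = otr (omult (omult z x) y)"
  by (cases x; cases y; cases z) (auto simp: omult_def otr_def algebra_simps split: prod.splits)

lemma oadd_ozero_right: "oadd x ozero = x"
  by (cases x) (auto simp: oadd_def ozero_def split: prod.splits)

lemma omult_ozero_left: "omult ozero x = ozero"
  by (cases x) (auto simp: omult_def ozero_def split: prod.splits)

subsection \<open>Automorphisms from matrix units\<close>

definition matrix_unit_pair :: "'a::comm_ring_1 oct \<Rightarrow> 'a oct \<Rightarrow> bool" where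
  "matrix_unit_pair U V \<longleftrightarrow> U \<in> quatM \<and> V \<in> quatM \<and> otr U = 0 \<and> onorm U = 0
     \<and> otr V = 0 \<and> onorm V = 0 \<and> otr (omult U V) = 1"

lemma matrix_unit_pairE:
  assumes "matrix_unit_pair U V"
  obtains u1 u2 u3 u4 v1 v2 v3 v4
  where "U = quat u1 u2 u3 u4" "V = quat v1 v2 v3 v4"
    "u1 + u4 = 0" "u1 * u4 - u2 * u3 = 0" "v1 + v4 = 0" "v1 * v4 - v2 * v3 = 0"
    "u1 * v1 + u2 * v3 + u3 * v2 + u4 * v4 = 1"
proof -
  obtain u1 u2 u3 u4 v1 v2 v3 v4 where "U = quat u1 u2 u3 u4" "V = quat v1 v2 v3 v4"
    using assms by (auto simp: matrix_unit_pair_def quatM_iff)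
  with assms that show ?thesis
    by (simp add: matrix_unit_pair_def omult_quat otr_quat onorm_quat algebra_simps)
qed

lemma matrix_unit_pair_ou1_ov1: "matrix_unit_pair ou1 ov1"
  by (simp add: matrix_unit_pair_def basis_eq_quat omult_quat otr_quat onorm_quat)

text \<open>\<open>frame_coords U V\<close> inverts \<open>frame_map U V\<close> on \<open>\<bbbM>\<close> by trace-form duality; its last
  coordinate is \<open>tr((zV)U)\<close>, rewritten using \<open>UV + VU = 1\<close>.\<close>

definition frame_map :: "'a::comm_ring_1 oct \<Rightarrow> 'a oct \<Rightarrow> 'a oct \<Rightarrow> 'a oct" where
  "frame_map U V z =
     oadd (oadd (osmul (oalpha z) (omult U V)) (osmul (fst (ou z)) U))
          (oadd (osmul (fst (ov z)) V) (osmul (obeta z) (omult V U)))"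

definition frame_coords :: "'a::comm_ring_1 oct \<Rightarrow> 'a oct \<Rightarrow> 'a oct \<Rightarrow> 'a oct" where
  "frame_coords U V z =
     quat (otr (omult (omult z U) V)) (otr (omult z V)) (otr (omult z U))
          (otr z - otr (omult (omult z U) V))"

lemma frame_map_in_quatM:
  assumes "U \<in> quatM" "V \<in> quatM"
  shows "frame_map U V z \<in> quatM"
  using assms by (auto simp: quatM_iff frame_map_def omult_quat oadd_quat osmul_quat)
    (auto simp: quat_def)

lemma frame_coords_in_quatM: "frame_coords U V z \<in> quatM"
  by (auto simp: quatM_iff frame_coords_def)

lemma frame_map_frame_coords:
  fixes U V :: "'a::field oct"
  assumes "matrix_unit_pair U V" "z \<in> quatM"
  shows "frame_map U V (frame_coords U V z) = z"
proof -
  obtain u1 u2 u3 u4 v1 v2 v3 v4 where UV: "U = quat u1 u2 u3 u4" "V = quat v1 v2 v3 v4"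
    and h: "u1 + u4 = 0" "u1 * u4 - u2 * u3 = 0" "v1 + v4 = 0" "v1 * v4 - v2 * v3 = 0"
      "u1 * v1 + u2 * v3 + u3 * v2 + u4 * v4 = 1"
    using assms(1) by (rule matrix_unit_pairE)
  obtain a c d b where z: "z = quat a c d b" using assms(2) by (auto simp: quatM_iff)
  show ?thesis unfolding UV z
    apply (simp add: frame_map_def frame_coords_def omult_quat oadd_quat osmul_quat otr_quat)
    apply (simp add: quat_def, intro conjI)
    using h by algebra+
qed

lemma frame_coords_frame_map:
  fixes U V :: "'a::field oct"
  assumes "matrix_unit_pair U V" "z \<in> quatM"
  shows "frame_coords U V (frame_map U V z) = z"
proof -
  obtain u1 u2 u3 u4 v1 v2 v3 v4 where UV: "U = quat u1 u2 u3 u4" "V = quat v1 v2 v3 v4"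
    and h: "u1 + u4 = 0" "u1 * u4 - u2 * u3 = 0" "v1 + v4 = 0" "v1 * v4 - v2 * v3 = 0"
      "u1 * v1 + u2 * v3 + u3 * v2 + u4 * v4 = 1"
    using assms(1) by (rule matrix_unit_pairE)
  obtain a c d b where z: "z = quat a c d b" using assms(2) by (auto simp: quatM_iff)
  show ?thesis unfolding UV z
    apply (simp add: frame_map_def frame_coords_def omult_quat oadd_quat osmul_quat otr_quat)
    apply (simp add: quat_def, intro conjI)
    using h by algebra+
qed

lemma frame_coords_ou1_ov1: "z \<in> quatM \<Longrightarrow> frame_coords ou1 ov1 z = z"
  by (auto simp: quatM_iff frame_coords_def basis_eq_quat omult_quat otr_quat)

lemma frame_map_ou1_ov1:
  assumes "U \<in> quatM" "V \<in> quatM"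
  shows "frame_map U V ou1 = U" "frame_map U V ov1 = V"
  using assms by (auto simp: quatM_iff frame_map_def basis_eq_quat omult_quat oadd_quat osmul_quat)

lemma frame_coords_left_right:
  fixes U V :: "'a::field oct"
  assumes "matrix_unit_pair U V"
  shows "frame_coords U V U = ou1" "frame_coords U V V = ov1"
proof -
  have "U \<in> quatM" "V \<in> quatM"
    using assms by (auto simp: matrix_unit_pair_def)
  then show "frame_coords U V U = ou1" "frame_coords U V V = ov1"
    using frame_coords_frame_map[OF assms] frame_map_ou1_ov1 by (metis basis_eq_quat quat_in_quatM)+
qed

subsection \<open>Extension to the octonions\<close>

text \<open>\<open>quat a c d b\<close> times \<open>oell\<close> is \<open>Oct 0 (0, a, d) (0, -b, c) 0\<close>, so every octonion is
  uniquely \<open>p + q\<ell>\<close> with \<open>p, q \<in> \<bbbM>\<close>, and \<open>cd_lift \<phi>\<close> is \<open>p + q\<ell> \<mapsto> \<phi>(p) + \<phi>(q)\<ell>\<close>.\<close>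

definition oell :: "'a::comm_ring_1 oct" where
  "oell = Oct 0 (0, 1, 0) (0, -1, 0) 0"

definition cd_lift :: "('a::comm_ring_1 oct \<Rightarrow> 'a oct) \<Rightarrow> 'a oct \<Rightarrow> 'a oct" where
  "cd_lift \<phi> x = (case x of Oct a (c, x2, x3) (d, y2, y3) b \<Rightarrow>
     oadd (\<phi> (quat a c d b)) (omult (\<phi> (quat x2 y3 x3 (- y2))) oell))"

lemma cd_lift_oadd_omult_oell:
  assumes "p \<in> quatM" "q \<in> quatM"
  shows "cd_lift \<phi> (oadd p (omult q oell)) = oadd (\<phi> p) (omult (\<phi> q) oell)"
  using assms by (auto simp: quatM_iff cd_lift_def quat_def oell_def oadd_def omult_def)

lemma cd_lift_eq_self:
  assumes "\<And>p. p \<in> quatM \<Longrightarrow> \<phi> p = p"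
  shows "cd_lift \<phi> x = x"
  using assms by (cases x) (simp add: cd_lift_def, simp add: quat_def oell_def oadd_def omult_def)

lemma cd_lift_cd_lift:
  assumes "\<And>p. p \<in> quatM \<Longrightarrow> \<psi> p \<in> quatM"
  shows "cd_lift \<phi> (cd_lift \<psi> x) = cd_lift (\<phi> \<circ> \<psi>) x"
  by (cases x) (auto simp: cd_lift_def[of \<psi>] cd_lift_def[of "\<phi> \<circ> \<psi>"] assms
      cd_lift_oadd_omult_oell split: prod.splits)

lemma bij_cd_lift:
  assumes "\<And>p. p \<in> quatM \<Longrightarrow> \<phi> p \<in> quatM" "\<And>p. p \<in> quatM \<Longrightarrow> \<psi> p \<in> quatM"
    and "\<And>p. p \<in> quatM \<Longrightarrow> \<phi> (\<psi> p) = p" "\<And>p. p \<in> quatM \<Longrightarrow> \<psi> (\<phi> p) = p"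
  shows "bij (cd_lift \<phi>)"
proof (rule o_bij)
  show "cd_lift \<phi> \<circ> cd_lift \<psi> = id"
    using assms by (auto simp: fun_eq_iff cd_lift_cd_lift intro: cd_lift_eq_self)
  show "cd_lift \<psi> \<circ> cd_lift \<phi> = id"
    using assms by (auto simp: fun_eq_iff cd_lift_cd_lift intro: cd_lift_eq_self)
qed

lemma cd_lift_quat:
  assumes "\<phi> ozero = ozero"
  shows "cd_lift \<phi> (quat a c d b) = \<phi> (quat a c d b)"
proof -
  have "cd_lift \<phi> (quat a c d b) = oadd (\<phi> (quat a c d b)) (omult (\<phi> ozero) oell)"
    by (simp add: cd_lift_def quat_def ozero_def)
  then show ?thesis
    by (simp add: assms omult_ozero_left oadd_ozero_right)
qed

lemma frame_map_ozero: "frame_map U V ozero = ozero"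
proof -
  have "smul3 0 w = (0, 0, 0)" for w :: "'a vec3"
    by (cases w) simp
  then show ?thesis
    by (simp add: frame_map_def ozero_def oadd_def osmul_def)
qed

lemma cd_lift_frame_map_oadd:
  "cd_lift (frame_map U V) (oadd x y) = oadd (cd_lift (frame_map U V) x) (cd_lift (frame_map U V) y)"
  by (cases x; cases y; cases U; cases V)
    (auto simp: cd_lift_def frame_map_def oadd_def osmul_def quat_def oell_def omult_def
      algebra_simps split: prod.splits)

lemma cd_lift_frame_map_osmul:
  "cd_lift (frame_map U V) (osmul k x) = osmul k (cd_lift (frame_map U V) x)"
  by (cases x; cases U; cases V)
    (auto simp: cd_lift_def frame_map_def oadd_def osmul_def quat_def oell_def omult_def
      algebra_simps split: prod.splits)

lemma cd_lift_frame_map_omult: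
  fixes U V :: "'a::field oct"
  assumes "matrix_unit_pair U V"
  shows "cd_lift (frame_map U V) (omult x y) =
    omult (cd_lift (frame_map U V) x) (cd_lift (frame_map U V) y)"
proof -
  obtain u1 u2 u3 u4 v1 v2 v3 v4 where UV: "U = quat u1 u2 u3 u4" "V = quat v1 v2 v3 v4"
    and h: "u1 + u4 = 0" "u1 * u4 - u2 * u3 = 0" "v1 + v4 = 0" "v1 * v4 - v2 * v3 = 0"
      "u1 * v1 + u2 * v3 + u3 * v2 + u4 * v4 = 1"
    using assms by (rule matrix_unit_pairE)
  obtain a c x2 x3 d y2 y3 b where x: "x = Oct a (c, x2, x3) (d, y2, y3) b"
    by (cases x) auto
  obtain a' c' x2' x3' d' y2' y3' b' where y: "y = Oct a' (c', x2', x3') (d', y2', y3') b'"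
    by (cases y) auto
  show ?thesis unfolding UV x y
    apply (simp add: omult_def cd_lift_def frame_map_def quat_def oell_def oadd_def osmul_def)
    apply (intro conjI)
    using h by algebra+
qed

lemma cd_lift_frame_map_in_G2:
  fixes U V :: "'a::field oct"
  assumes "matrix_unit_pair U V"
  shows "cd_lift (frame_map U V) \<in> G2"
proof -
  have "U \<in> quatM" "V \<in> quatM"
    using assms by (auto simp: matrix_unit_pair_def)
  then have "bij (cd_lift (frame_map U V))"
    using assms by (intro bij_cd_lift[where \<psi> = "frame_coords U V"])
      (auto simp: frame_map_in_quatM frame_coords_in_quatM frame_map_frame_coords
        frame_coords_frame_map)
  then show ?thesis
    unfolding G2_def
    using cd_lift_frame_map_oadd cd_lift_frame_map_osmul cd_lift_frame_map_omult[OF assms]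
    by blast
qed

lemma eq_cd_lift_frame_map_if_frame_coords_eq:
  fixes U V :: "'a::field oct"
  assumes "matrix_unit_pair U V" "z \<in> quatM" "w \<in> quatM"
    and "frame_coords U V z = frame_coords ou1 ov1 w"
  shows "z = cd_lift (frame_map U V) w"
proof -
  have "z = frame_map U V (frame_coords U V z)"
    using assms(1,2) by (simp add: frame_map_frame_coords)
  also have "\<dots> = frame_map U V w"
    using assms(3,4) by (simp add: frame_coords_ou1_ov1)
  also have "\<dots> = cd_lift (frame_map U V) w"
    using assms(3) by (auto simp: quatM_iff cd_lift_quat frame_map_ozero)
  finally show ?thesis .
qed

lemma S3_onorm_eq:
  assumes "\<forall>f \<in> S3 n. f xs = f ys" "i < n"
  shows "onorm (xs ! i) = onorm (ys ! i)"
proof -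
  have "(\<lambda>x. onorm (x ! i)) \<in> S3 n" using assms(2) unfolding S3_def by blast
  with assms(1) show ?thesis by fastforce
qed

lemma S3_otr_eq:
  assumes "\<forall>f \<in> S3 n. f xs = f ys" "i < n"
  shows "otr (xs ! i) = otr (ys ! i)"
proof -
  have "(\<lambda>x. otr (x ! i)) \<in> S3 n" using assms(2) unfolding S3_def by blast
  with assms(1) show ?thesis by fastforce
qed

lemma S3_otr_omult_eq:
  assumes "\<forall>f \<in> S3 n. f xs = f ys" "i < j" "j < n"
  shows "otr (omult (xs ! i) (xs ! j)) = otr (omult (ys ! i) (ys ! j))"
proof -
  have "(\<lambda>x. otr (omult (x ! i) (x ! j))) \<in> S3 n" using assms(2,3) unfolding S3_def by blast
  with assms(1) show ?thesis by fastforce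
qed

lemma S3_otr_omult3_eq:
  assumes "\<forall>f \<in> S3 n. f xs = f ys" "i < j" "j < k" "k < n"
  shows "otr (omult (omult (xs ! i) (xs ! j)) (xs ! k)) = otr (omult (omult (ys ! i) (ys ! j)) (ys ! k))"
proof -
  have "(\<lambda>x. otr (omult (omult (x ! i) (x ! j)) (x ! k))) \<in> S3 n"
    using assms(2-4) unfolding S3_def by blast
  with assms(1) show ?thesis by fastforce
qed

lemma matrix_unit_pair_S3:
  assumes "\<forall>f \<in> S3 n. f xs = f ys" "j < k" "k < n" "set ys \<subseteq> quatM" "length ys = n"
    and "matrix_unit_pair (xs ! j) (xs ! k)"
  shows "matrix_unit_pair (ys ! j) (ys ! k)"
  using assms S3_onorm_eq[OF assms(1)] S3_otr_eq[OF assms(1)] S3_otr_omult_eq[OF assms(1)]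
  by (auto simp: matrix_unit_pair_def subset_iff)

lemma frame_coords_S3:
  assumes "\<forall>f \<in> S3 n. f xs = f ys" "j < k" "i < n" "k < n" "i < j \<or> k < i"
  shows "frame_coords (xs ! j) (xs ! k) (xs ! i) = frame_coords (ys ! j) (ys ! k) (ys ! i)"
  using assms(5)
proof
  assume "i < j"
  then show ?thesis
    using assms(2,4) S3_otr_eq[OF assms(1,3)] S3_otr_omult_eq[OF assms(1)]
      S3_otr_omult3_eq[OF assms(1)]
    by (simp add: frame_coords_def)
next
  assume "k < i"
  have "otr (omult (omult (zs ! i) (zs ! j)) (zs ! k)) = otr (omult (omult (zs ! j) (zs ! k)) (zs ! i))"
    for zs :: "'a oct list"
    by (metis otr_omult_cyclic)
  moreover have "otr (omult (zs ! i) (zs ! m)) = otr (omult (zs ! m) (zs ! i))"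
    for zs :: "'a oct list" and m
    by (rule otr_omult_commute)
  ultimately show ?thesis
    using \<open>k < i\<close> assms(2,3) S3_otr_eq[OF assms(1,3)] S3_otr_omult_eq[OF assms(1)]
      S3_otr_omult3_eq[OF assms(1) assms(2) \<open>k < i\<close> assms(3)]
    by (simp add: frame_coords_def)
qed

lemma frame_coords_consecutive_S3:
  fixes xs ys :: "'a::field oct list"
  assumes "\<forall>f \<in> S3 n. f xs = f ys" "Suc j < n" "i < n"
    and "matrix_unit_pair (xs ! j) (xs ! Suc j)" "matrix_unit_pair (ys ! j) (ys ! Suc j)"
  shows "frame_coords (xs ! j) (xs ! Suc j) (xs ! i) = frame_coords (ys ! j) (ys ! Suc j) (ys ! i)"
proof (cases "i = j \<or> i = Suc j")
  case True
  then show ?thesis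
    using frame_coords_left_right[OF assms(4)] frame_coords_left_right[OF assms(5)] by auto
next
  case False
  then have "i < j \<or> Suc j < i" by linarith
  then show ?thesis
    using frame_coords_S3[OF assms(1) _ assms(3,2)] by simp
qed

lemma map_cd_lift_if_S3_eq:
  fixes xs ys :: "'a::field oct list"
  assumes inv: "\<forall>f \<in> S3 n. f xs = f ys"
    and "length xs = n" "length ys = n" "set xs \<subseteq> quatM" "set ys \<subseteq> quatM"
    and "Suc j < n" "xs ! j = ou1" "xs ! Suc j = ov1"
  shows "matrix_unit_pair (ys ! j) (ys ! Suc j)"
    and "ys = map (cd_lift (frame_map (ys ! j) (ys ! Suc j))) xs"
proof -
  show UV: "matrix_unit_pair (ys ! j) (ys ! Suc j)"
    using matrix_unit_pair_S3[OF inv _ _ assms(5,3), of j "Suc j"] assms(6-8)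
    by (simp add: matrix_unit_pair_ou1_ov1)
  have "frame_coords (ys ! j) (ys ! Suc j) (ys ! i) = frame_coords ou1 ov1 (xs ! i)" if "i < n" for i
    using frame_coords_consecutive_S3[OF inv assms(6) that _ UV] assms(7,8)
    by (simp add: matrix_unit_pair_ou1_ov1)
  then have "ys ! i = cd_lift (frame_map (ys ! j) (ys ! Suc j)) (xs ! i)" if "i < n" for i
    using that eq_cd_lift_frame_map_if_frame_coords_eq[OF UV] assms(2-5) by (simp add: subset_iff)
  then show "ys = map (cd_lift (frame_map (ys ! j) (ys ! Suc j))) xs"
    using assms(2,3) by (intro nth_equalityI) simp_all
qed

lemma G2_comp: "g \<in> G2 \<Longrightarrow> h \<in> G2 \<Longrightarrow> h \<circ> g \<in> G2"
  unfolding G2_def by (auto intro: bij_comp)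

lemma G2_inv:
  assumes "g \<in> G2"
  shows "inv g \<in> G2"
proof -
  have g: "bij g" "\<And>x y. g (oadd x y) = oadd (g x) (g y)" "\<And>c x. g (osmul c x) = osmul c (g x)"
    "\<And>x y. g (omult x y) = omult (g x) (g y)"
    using assms unfolding G2_def by auto
  have gi: "g (inv g x) = x" and ig: "inv g (g x) = x" for x
    using g(1) by (simp_all add: bij_is_surj surj_f_inv_f bij_is_inj)
  have "inv g (oadd x y) = oadd (inv g x) (inv g y)" for x y
    by (metis g(2) gi ig)
  moreover have "inv g (osmul c x) = osmul c (inv g x)" for c x
    by (metis g(3) gi ig)
  moreover have "inv g (omult x y) = omult (inv g x) (inv g y)" for x y
    by (metis g(4) gi ig)
  ultimately show ?thesis using g(1)
    unfolding G2_def by (auto intro: bij_imp_bij_inv)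
qed

lemma G2_orbit_map_subset: "g \<in> G2 \<Longrightarrow> G2_orbit (map g xs) \<subseteq> G2_orbit xs"
  unfolding G2_orbit_def by (auto simp: map_map intro: G2_comp)

lemma G2_orbit_map:
  assumes "g \<in> G2"
  shows "G2_orbit (map g xs) = G2_orbit xs"
proof
  show "G2_orbit (map g xs) \<subseteq> G2_orbit xs"
    using assms by (rule G2_orbit_map_subset)
  have "xs = map (inv g) (map g xs)"
    using assms by (simp add: G2_def bij_is_inj)
  then show "G2_orbit xs \<subseteq> G2_orbit (map g xs)"
    using G2_orbit_map_subset[OF G2_inv[OF assms], of "map g xs"] by simp
qed

theorem lemma7p8:
  fixes n :: nat and b :: "'a::field oct list"
  assumes "alg_closed TYPE('a)"
    and "(2::'a) = 0"
    and "n \<ge> 4"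
    and "length b = n" and "set b \<subseteq> quatM"
    and "\<forall>f \<in> S3 n. f (oe1 # oe2 # ou1 # ov1 # replicate (n - 4) ozero) = f b"
  shows "G2_orbit (oe1 # oe2 # ou1 # ov1 # replicate (n - 4) ozero) = G2_orbit b"
proof -
  define a :: "'a oct list" where "a = oe1 # oe2 # ou1 # ov1 # replicate (n - 4) ozero"
  have "\<forall>f \<in> S3 n. f a = f b" "length a = n" "set a \<subseteq> quatM" "a ! 2 = ou1" "a ! Suc 2 = ov1"
    using assms(3,6) by (auto simp: a_def basis_eq_quat)
  then have "matrix_unit_pair (b ! 2) (b ! Suc 2)"
    and "b = map (cd_lift (frame_map (b ! 2) (b ! Suc 2))) a"
    using map_cd_lift_if_S3_eq[of n a b 2] assms(3-5) by simp_all
  then have "G2_orbit b = G2_orbit a"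
    by (metis G2_orbit_map cd_lift_frame_map_in_G2)
  then show ?thesis
    by (simp add: a_def)
qed

end
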